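(* Let $d,k,j\ge1$. If there is no $\mathfrak W_k$-equivariant map $Y_{d,k}\to S(U_k^{\oplus j})$, then there is also no $\mathfrak W_k$-equivariant map $Y_{d-1,k}\to S\big(U_k^{\oplus(j-1)}\oplus\bigoplus_{\alpha\in B}V_\alpha\big)$.
   Context: $Y_{d,k}=(S^d)^k$ with $S^d\subset\mathbb{R}^{d+1}$, and $Y_{d-1,k}\subset Y_{d,k}$ is the subspace of tuples with each $x_i\perp e_{d+1}$ (product of equators). $\mathfrak W_k=(\mathbb{Z}/2)^k\rtimes\mathfrak S_k$ acts on $Y_{d,k}$ by $((\beta_1,\dots,\beta_k)\rtimes\tau)\cdot(v_1,\dots,v_k)=((-1)^{\beta_1}v_{\tau^{-1}(1)},\dots,(-1)^{\beta_k}v_{\tau^{-1}(k)})$. $U_k=\{(y_\gamma)_{\gamma\in(\mathbb{Z}/2)^k}:\sum_\gamma y_\gamma=0\}\subset\mathbb{R}^{(\mathbb{Z}/2)^k}$ with $\mathfrak W_k$ permuting coordinates via the action on indices $((\beta)\rtimes\tau)\cdot\gamma=(\beta_1+\gamma_{\tau^{-1}(1)},\dots,\beta_k+\gamma_{\tau^{-1}(k)})$ mod 2; $U_k^{\oplus j}$ carries the diagonal action, $S(\cdot)$ denotes the unit sphere. For $\alpha\in(\mathbb{Z}/2)^k\setminus\{0\}$, $V_\alpha\subset U_k$ is the line spanned by $((-1)^{\langle\alpha,\gamma\rangle})_{\gamma}$; as a $(\mathbb{Z}/2)^k$-representation $\beta$ acts on $V_\alpha$ by $(-1)^{\sum_i\alpha_i\beta_i}$,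 and $U_k=\bigoplus_{\alpha\ne0}V_\alpha$. $B\subset(\mathbb{Z}/2)^k$ is the set of $\alpha$ with at least two nonzero coordinates; $\bigoplus_{\alpha\in B}V_\alpha$ is a $\mathfrak W_k$-invariant subspace of $U_k$. *)

theory Defs
  imports "HOL-Analysis.Analysis" "HOL-Combinatorics.Permutations"
begin

text \<open>Points of R^(d+1) are functions nat => real supported in {0..d};
  coordinate d plays the role of e_(d+1).\<close>
definition sphere_pts :: "nat \<Rightarrow> (nat \<Rightarrow> real) set" where
  "sphere_pts d = {x. (\<forall>i>d. x i = 0) \<and> (\<Sum>i\<le>d. (x i)^2) = 1}"

text \<open>Y_(d,k) = (S^d)^k, tuples indexed by {0..<k}, extended by 0.\<close>
definition Yspace :: "nat \<Rightarrow> nat \<Rightarrow> (nat \<Rightarrow> nat \<Rightarrow> real) set" where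
  "Yspace d k = {v. (\<forall>i<k. v i \<in> sphere_pts d) \<and> (\<forall>i\<ge>k. v i = (\<lambda>_. 0))}"

text \<open>Y_(d-1,k) as the subspace of Y_(d,k) of tuples orthogonal to e_(d+1).\<close>
definition Yequator :: "nat \<Rightarrow> nat \<Rightarrow> (nat \<Rightarrow> nat \<Rightarrow> real) set" where
  "Yequator d k = {v \<in> Yspace d k. \<forall>i<k. v i d = 0}"

text \<open>The group W_k = (Z/2)^k \<rtimes> S_k; beta is encoded as the subset of {..<k}
  where beta_i = 1.\<close>
definition Wgroup :: "nat \<Rightarrow> (nat set \<times> (nat \<Rightarrow> nat)) set" where
  "Wgroup k = {(\<beta>, \<tau>). \<beta> \<subseteq> {..<k} \<and> \<tau> permutes {..<k}}"

definition sgn_bool :: "bool \<Rightarrow> real" where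
  "sgn_bool b = (if b then -1 else 1)"

definition actY :: "nat \<Rightarrow> nat set \<times> (nat \<Rightarrow> nat) \<Rightarrow> (nat \<Rightarrow> nat \<Rightarrow> real) \<Rightarrow> (nat \<Rightarrow> nat \<Rightarrow> real)" where
  "actY k g v = (\<lambda>i. if i < k then (\<lambda>t. sgn_bool (i \<in> fst g) * v (inv (snd g) i) t) else (\<lambda>_. 0))"

text \<open>Action on indices gamma in (Z/2)^k (encoded as subsets of {..<k}):
  (beta,tau).gamma = beta + tau(gamma), i.e. symmetric difference.\<close>
definition symdiff :: "nat set \<Rightarrow> nat set \<Rightarrow> nat set" where
  "symdiff A B = (A - B) \<union> (B - A)"

definition act_idx :: "nat set \<times> (nat \<Rightarrow> nat) \<Rightarrow> nat set \<Rightarrow> nat set" where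
  "act_idx g \<gamma> = symdiff (fst g) (snd g ` \<gamma>)"

text \<open>Elements of R^((Z/2)^k)^(oplus j): y l gamma for l<j, gamma subset {..<k};
  zero elsewhere. W_k permutes coordinates: (g.y)_(g.gamma) = y_gamma,
  diagonally on the j summands.\<close>
definition actU :: "nat \<Rightarrow> nat set \<times> (nat \<Rightarrow> nat) \<Rightarrow> (nat \<Rightarrow> nat set \<Rightarrow> real) \<Rightarrow> (nat \<Rightarrow> nat set \<Rightarrow> real)" where
  "actU k g y = (\<lambda>l \<gamma>. if \<gamma> \<subseteq> {..<k}
      then y l (THE \<delta>. \<delta> \<subseteq> {..<k} \<and> act_idx g \<delta> = \<gamma>) else 0)"

definition in_Uk :: "nat \<Rightarrow> (nat set \<Rightarrow> real) \<Rightarrow> bool" where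
  "in_Uk k z \<longleftrightarrow> (\<forall>\<gamma>. \<not> \<gamma> \<subseteq> {..<k} \<longrightarrow> z \<gamma> = 0) \<and> (\<Sum>\<gamma>\<in>Pow {..<k}. z \<gamma>) = 0"

text \<open>B = alphas with at least two nonzero coordinates; V_alpha spanned by
  ((-1)^<alpha,gamma>)_gamma.\<close>
definition Bset :: "nat \<Rightarrow> nat set set" where
  "Bset k = {\<alpha>. \<alpha> \<subseteq> {..<k} \<and> card \<alpha> \<ge> 2}"

definition in_VB :: "nat \<Rightarrow> (nat set \<Rightarrow> real) \<Rightarrow> bool" where
  "in_VB k z \<longleftrightarrow> (\<forall>\<gamma>. \<not> \<gamma> \<subseteq> {..<k} \<longrightarrow> z \<gamma> = 0) \<and>
     (\<exists>c :: nat set \<Rightarrow> real. \<forall>\<gamma>\<subseteq>{..<k}.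
        z \<gamma> = (\<Sum>\<alpha>\<in>Bset k. c \<alpha> * (-1) ^ card (\<alpha> \<inter> \<gamma>)))"

definition sqnorm :: "nat \<Rightarrow> nat \<Rightarrow> (nat \<Rightarrow> nat set \<Rightarrow> real) \<Rightarrow> real" where
  "sqnorm k j y = (\<Sum>l<j. \<Sum>\<gamma>\<in>Pow {..<k}. (y l \<gamma>)^2)"

definition SU :: "nat \<Rightarrow> nat \<Rightarrow> (nat \<Rightarrow> nat set \<Rightarrow> real) set" where
  "SU k j = {y. (\<forall>l<j. in_Uk k (y l)) \<and> (\<forall>l\<ge>j. y l = (\<lambda>_. 0)) \<and> sqnorm k j y = 1}"

text \<open>S(U_k^(oplus (j-1)) oplus (oplus_(alpha in B) V_alpha)), realised inside
  U_k^(oplus j) with the last summand (index j-1) in the B-subspace.\<close>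
definition SUB :: "nat \<Rightarrow> nat \<Rightarrow> (nat \<Rightarrow> nat set \<Rightarrow> real) set" where
  "SUB k j = {y. (\<forall>l<j - 1. in_Uk k (y l)) \<and> in_VB k (y (j - 1)) \<and>
                 (\<forall>l\<ge>j. y l = (\<lambda>_. 0)) \<and> sqnorm k j y = 1}"

definition equivariant_map ::
  "nat \<Rightarrow> (nat \<Rightarrow> nat \<Rightarrow> real) set \<Rightarrow> (nat \<Rightarrow> nat set \<Rightarrow> real) set
     \<Rightarrow> ((nat \<Rightarrow> nat \<Rightarrow> real) \<Rightarrow> (nat \<Rightarrow> nat set \<Rightarrow> real)) \<Rightarrow> bool" where
  "equivariant_map k X A f \<longleftrightarrow> continuous_on X f \<and> f ` X \<subseteq> A \<and>
     (\<forall>g\<in>Wgroup k. \<forall>x\<in>X. f (actY k g x) = actU k g (f x))"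

end

theory Submission
  imports Defs
begin

text \<open>Given an equivariant f on the product of equators, extend it to all of Y_(d,k):
  write each x_i as a horizontal part of norm r_i plus a height x_i(d), let
  rho = r_0 \<dots> r_(k-1), and set
    G(x) = rho(x) * f(x_0/r_0, \<dots>, x_(k-1)/r_(k-1)) + (0, \<dots>, 0, h(x)),
  where h(x)_gamma = \<Sum>_i x_i(d) (-1)^[i \<in> gamma] lies in the sum of the V_alpha with
  |alpha| = 1. Since f takes its last component in the sum of the V_alpha with
  alpha \<in> B, which is orthogonal to h(x), and rho = 1 whenever all heights vanish,
  G never vanishes; G/|G| is then an equivariant map Y_(d,k) \<rightarrow> S(U_k^j).\<close>

section \<open>Characters of (Z/2)^k\<close>

lemma sgn_bool_eq_power_card: "sgn_bool (i \<in> \<gamma>) = (-1::real) ^ card ({i} \<inter> \<gamma>)"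
  by (cases "i \<in> \<gamma>") (auto simp: sgn_bool_def)

lemma sgn_bool_symdiff: "sgn_bool (i \<in> symdiff A B) = sgn_bool (i \<in> A) * sgn_bool (i \<in> B)"
  by (auto simp: sgn_bool_def symdiff_def)

lemma sgn_bool_sq [simp]: "(sgn_bool b)^2 = 1"
  by (simp add: sgn_bool_def)

lemma power_card_Int_symdiff:
  assumes "finite A" "finite B"
  shows "(-1::real) ^ card (A \<inter> \<gamma>) * (-1) ^ card (B \<inter> \<gamma>) = (-1) ^ card (symdiff A B \<inter> \<gamma>)"
proof -
  let ?X = "A \<inter> \<gamma>" and ?Y = "B \<inter> \<gamma>"
  have fin: "finite ?X" "finite ?Y" using assms by auto
  have "symdiff A B \<inter> \<gamma> = (?X \<union> ?Y) - (?X \<inter> ?Y)" by (auto simp: symdiff_def)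
  then have "card (symdiff A B \<inter> \<gamma>) = card (?X \<union> ?Y) - card (?X \<inter> ?Y)"
    using fin by (simp only:) (rule card_Diff_subset, auto)
  moreover have "card (?X \<inter> ?Y) \<le> card (?X \<union> ?Y)" using fin by (intro card_mono) auto
  ultimately have "card ?X + card ?Y = card (symdiff A B \<inter> \<gamma>) + 2 * card (?X \<inter> ?Y)"
    using card_Un_Int[OF fin] by simp
  then have "(-1::real) ^ card ?X * (-1) ^ card ?Y = (-1) ^ (card (symdiff A B \<inter> \<gamma>) + 2 * card (?X \<inter> ?Y))"
    by (simp only: power_add[symmetric])
  then show ?thesis by (simp add: power_add power_mult)
qed

lemma sum_Pow_power_card_Int_eq_0:
  assumes "finite K" "A \<subseteq> K" "A \<noteq> {}"
  shows "(\<Sum>\<gamma>\<in>Pow K. (-1::real) ^ card (A \<inter> \<gamma>)) = 0"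
proof -
  obtain a where a: "a \<in> A" using assms by auto
  define K' where "K' = K - {a}"
  have K: "K = insert a K'" "a \<notin> K'" using a assms K'_def by auto
  have fin: "finite K'" using assms K'_def by auto
  have flip: "card (A \<inter> insert a \<gamma>) = Suc (card (A \<inter> \<gamma>))" if "\<gamma> \<in> Pow K'" for \<gamma>
  proof -
    have "A \<inter> insert a \<gamma> = insert a (A \<inter> \<gamma>)" "a \<notin> A \<inter> \<gamma>" using a K that by auto
    then show ?thesis using fin that by (simp add: finite_subset[of _ K'])
  qed
  have "(\<Sum>\<gamma>\<in>Pow K. (-1::real) ^ card (A \<inter> \<gamma>))
      = (\<Sum>\<gamma>\<in>Pow K'. (-1::real) ^ card (A \<inter> \<gamma>)) + (\<Sum>\<gamma>\<in>insert a ` Pow K'. (-1) ^ card (A \<inter> \<gamma>))"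
    unfolding K(1) Pow_insert using fin K by (intro sum.union_disjoint) auto
  also have "(\<Sum>\<gamma>\<in>insert a ` Pow K'. (-1::real) ^ card (A \<inter> \<gamma>))
      = (\<Sum>\<gamma>\<in>Pow K'. (-1) ^ card (A \<inter> insert a \<gamma>))"
    using K by (intro sum.reindex[unfolded comp_def]) (auto simp: inj_on_def)
  also have "\<dots> = - (\<Sum>\<gamma>\<in>Pow K'. (-1::real) ^ card (A \<inter> \<gamma>))"
    by (simp add: flip sum_negf)
  finally show ?thesis by simp
qed

lemma sum_Pow_sgn_bool:
  fixes k :: nat
  assumes "i < k"
  shows "(\<Sum>\<gamma>\<in>Pow {..<k}. sgn_bool (i \<in> \<gamma>)) = 0"
  unfolding sgn_bool_eq_power_card using assms by (intro sum_Pow_power_card_Int_eq_0) auto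

lemma sum_Pow_sgn_bool_mult:
  fixes k :: nat
  assumes "i < k" "i0 < k"
  shows "(\<Sum>\<gamma>\<in>Pow {..<k}. sgn_bool (i \<in> \<gamma>) * sgn_bool (i0 \<in> \<gamma>)) = (if i = i0 then 2^k else 0)"
proof (cases "i = i0")
  case True
  then show ?thesis by (simp flip: power2_eq_square add: card_Pow)
next
  case False
  have "(\<Sum>\<gamma>\<in>Pow {..<k}. sgn_bool (i \<in> \<gamma>) * sgn_bool (i0 \<in> \<gamma>))
      = (\<Sum>\<gamma>\<in>Pow {..<k}. (-1::real) ^ card (symdiff {i} {i0} \<inter> \<gamma>))"
    by (simp add: sgn_bool_eq_power_card power_card_Int_symdiff)
  also have "\<dots> = 0"
    using assms False by (intro sum_Pow_power_card_Int_eq_0) (auto simp: symdiff_def)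
  finally show ?thesis using False by simp
qed

section \<open>The action of W_k on U_k^j\<close>

lemma the_act_idx_eq:
  assumes g: "(\<beta>, \<tau>) \<in> Wgroup k" and \<gamma>: "\<gamma> \<subseteq> {..<k}"
  shows "(THE \<delta>. \<delta> \<subseteq> {..<k} \<and> act_idx (\<beta>, \<tau>) \<delta> = \<gamma>) = inv \<tau> ` symdiff \<beta> \<gamma>"
proof (rule the_equality)
  have p: "\<tau> permutes {..<k}" and b: "\<beta> \<subseteq> {..<k}" using g by (auto simp: Wgroup_def)
  have "inv \<tau> ` symdiff \<beta> \<gamma> \<subseteq> {..<k}"
    using b \<gamma> permutes_image[OF permutes_inv[OF p]] by (auto simp: symdiff_def)
  moreover have "\<tau> ` inv \<tau> ` symdiff \<beta> \<gamma> = symdiff \<beta> \<gamma>"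
    by (simp add: image_comp permutes_inverses(1)[OF p] comp_def)
  ultimately show "inv \<tau> ` symdiff \<beta> \<gamma> \<subseteq> {..<k} \<and> act_idx (\<beta>, \<tau>) (inv \<tau> ` symdiff \<beta> \<gamma>) = \<gamma>"
    by (auto simp: act_idx_def symdiff_def)
  fix \<delta> assume "\<delta> \<subseteq> {..<k} \<and> act_idx (\<beta>, \<tau>) \<delta> = \<gamma>"
  then have "\<tau> ` \<delta> = symdiff \<beta> \<gamma>" by (auto simp: act_idx_def symdiff_def)
  then have "inv \<tau> ` \<tau> ` \<delta> = inv \<tau> ` symdiff \<beta> \<gamma>" by simp
  then show "\<delta> = inv \<tau> ` symdiff \<beta> \<gamma>"
    by (simp add: image_comp permutes_inverses(2)[OF p] comp_def)
qed

lemma bij_betw_act_idx_inv: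
  assumes g: "(\<beta>, \<tau>) \<in> Wgroup k"
  shows "bij_betw (\<lambda>\<gamma>. inv \<tau> ` symdiff \<beta> \<gamma>) (Pow {..<k}) (Pow {..<k})"
proof (rule bij_betw_byWitness[where f'="\<lambda>\<delta>. symdiff \<beta> (\<tau> ` \<delta>)"])
  have p: "\<tau> permutes {..<k}" and b: "\<beta> \<subseteq> {..<k}" using g by (auto simp: Wgroup_def)
  show "\<forall>\<gamma>\<in>Pow {..<k}. symdiff \<beta> (\<tau> ` inv \<tau> ` symdiff \<beta> \<gamma>) = \<gamma>"
    by (auto simp: image_comp permutes_inverses(1)[OF p] comp_def symdiff_def)
  show "\<forall>\<delta>\<in>Pow {..<k}. inv \<tau> ` symdiff \<beta> (symdiff \<beta> (\<tau> ` \<delta>)) = \<delta>"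
  proof
    fix \<delta> :: "nat set"
    have "symdiff \<beta> (symdiff \<beta> (\<tau> ` \<delta>)) = \<tau> ` \<delta>" by (auto simp: symdiff_def)
    then show "inv \<tau> ` symdiff \<beta> (symdiff \<beta> (\<tau> ` \<delta>)) = \<delta>"
      by (simp add: image_comp permutes_inverses(2)[OF p] comp_def)
  qed
  show "(\<lambda>\<gamma>. inv \<tau> ` symdiff \<beta> \<gamma>) ` Pow {..<k} \<subseteq> Pow {..<k}"
    using b permutes_image[OF permutes_inv[OF p]] by (auto simp: symdiff_def)
  show "(\<lambda>\<delta>. symdiff \<beta> (\<tau> ` \<delta>)) ` Pow {..<k} \<subseteq> Pow {..<k}"
    using b permutes_image[OF p] by (auto simp: symdiff_def)
qed

lemma actU_apply:
  assumes "(\<beta>, \<tau>) \<in> Wgroup k"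
  shows "actU k (\<beta>, \<tau>) y l \<gamma> = (if \<gamma> \<subseteq> {..<k} then y l (inv \<tau> ` symdiff \<beta> \<gamma>) else 0)"
  using the_act_idx_eq[OF assms] by (simp add: actU_def)

lemma sqnorm_actU:
  assumes g: "g \<in> Wgroup k"
  shows "sqnorm k j (actU k g y) = sqnorm k j y"
proof -
  obtain \<beta> \<tau> where g_eq: "g = (\<beta>, \<tau>)" by fastforce
  have "(\<Sum>\<gamma>\<in>Pow {..<k}. (actU k g y l \<gamma>)^2) = (\<Sum>\<gamma>\<in>Pow {..<k}. (y l \<gamma>)^2)" for l
  proof -
    have "(\<Sum>\<gamma>\<in>Pow {..<k}. (actU k g y l \<gamma>)^2)
        = (\<Sum>\<gamma>\<in>Pow {..<k}. (y l (inv \<tau> ` symdiff \<beta> \<gamma>))^2)"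
      using g g_eq by (intro sum.cong) (auto simp: actU_apply)
    also have "\<dots> = (\<Sum>\<gamma>\<in>Pow {..<k}. (y l \<gamma>)^2)"
      using sum.reindex_bij_betw[OF bij_betw_act_idx_inv, of \<beta> \<tau> k "\<lambda>\<delta>. (y l \<delta>)^2"] g g_eq
      by simp
    finally show ?thesis .
  qed
  then show ?thesis by (simp add: sqnorm_def)
qed

lemma coord_sq_le_sqnorm:
  assumes "l < j" "\<gamma> \<subseteq> {..<k}"
  shows "(y l \<gamma>)^2 \<le> sqnorm k j y"
proof -
  have "(y l \<gamma>)^2 \<le> (\<Sum>\<gamma>\<in>Pow {..<k}. (y l \<gamma>)^2)"
    by (rule member_le_sum) (use assms in auto)
  also have "\<dots> \<le> sqnorm k j y" unfolding sqnorm_def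
    by (rule member_le_sum[where f="\<lambda>l. \<Sum>\<gamma>\<in>Pow {..<k}. (y l \<gamma>)^2"])
      (use assms in \<open>auto intro: sum_nonneg\<close>)
  finally show ?thesis .
qed

lemma sqnorm_nonneg: "sqnorm k j y \<ge> 0"
  unfolding sqnorm_def by (intro sum_nonneg) simp

lemma sqnorm_eq_0_imp_coord_eq_0:
  assumes "sqnorm k j y = 0" "l < j" "\<gamma> \<subseteq> {..<k}"
  shows "y l \<gamma> = 0"
  using coord_sq_le_sqnorm[of l j \<gamma> k y] assms by simp

lemma abs_coord_SUB_le_1:
  assumes "y \<in> SUB k j" "l < j" "\<gamma> \<subseteq> {..<k}"
  shows "\<bar>y l \<gamma>\<bar> \<le> 1"
  using coord_sq_le_sqnorm[of l j \<gamma> k y] assms by (simp add: SUB_def abs_square_le_1)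

definition normalize :: "nat \<Rightarrow> nat \<Rightarrow> (nat \<Rightarrow> nat set \<Rightarrow> real) \<Rightarrow> (nat \<Rightarrow> nat set \<Rightarrow> real)" where
  "normalize k j y = (\<lambda>l \<gamma>. y l \<gamma> / sqrt (sqnorm k j y))"

lemma normalize_in_SU:
  assumes U: "\<forall>l<j. in_Uk k (y l)" and vanish: "\<forall>l\<ge>j. y l = (\<lambda>_. 0)"
    and pos: "sqnorm k j y > 0"
  shows "normalize k j y \<in> SU k j"
proof -
  have "sqnorm k j (normalize k j y) = sqnorm k j y / (sqrt (sqnorm k j y))^2"
    unfolding sqnorm_def normalize_def power_divide by (simp only: sum_divide_distrib[symmetric])
  then have "sqnorm k j (normalize k j y) = 1" using pos by simp
  moreover have "in_Uk k (normalize k j y l)" if "l < j" for l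
    using U that by (simp add: in_Uk_def normalize_def flip: sum_divide_distrib)
  ultimately show ?thesis using vanish by (simp add: SU_def normalize_def)
qed

lemma normalize_actU:
  assumes "g \<in> Wgroup k"
  shows "normalize k j (actU k g y) = actU k g (normalize k j y)"
  unfolding normalize_def sqnorm_actU[OF assms] by (simp add: actU_def fun_eq_iff)

lemma continuous_on_normalize:
  assumes "\<And>l \<gamma>. continuous_on S (\<lambda>x. y x l \<gamma>)" and "\<And>x. x \<in> S \<Longrightarrow> sqnorm k j (y x) > 0"
  shows "continuous_on S (\<lambda>x. normalize k j (y x))"
proof (intro continuous_on_coordinatewise_then_product)
  fix l \<gamma>
  have "continuous_on S (\<lambda>x. sqnorm k j (y x))"
    unfolding sqnorm_def by (intro continuous_intros assms)
  then show "continuous_on S (\<lambda>x. normalize k j (y x) l \<gamma>)"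
    unfolding normalize_def using assms
    by (intro continuous_on_divide continuous_on_compose2[OF continuous_on_real_sqrt])
      (auto dest: less_imp_neq[symmetric])
qed

section \<open>Orthogonality of the B-part to low-degree characters\<close>

lemma in_VB_orthogonal_character:
  assumes z: "in_VB k z" and A: "A \<subseteq> {..<k}" "card A \<le> 1"
  shows "(\<Sum>\<gamma>\<in>Pow {..<k}. z \<gamma> * (-1) ^ card (A \<inter> \<gamma>)) = 0"
proof -
  obtain c where c: "\<forall>\<gamma>\<subseteq>{..<k}. z \<gamma> = (\<Sum>\<alpha>\<in>Bset k. c \<alpha> * (-1) ^ card (\<alpha> \<inter> \<gamma>))"
    using z by (auto simp: in_VB_def)
  have "finite A" using A finite_subset by blast
  then have char: "(-1::real) ^ card (\<alpha> \<inter> \<gamma>) * (-1) ^ card (A \<inter> \<gamma>) = (-1) ^ card (symdiff \<alpha> A \<inter> \<gamma>)"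
    if "\<alpha> \<in> Bset k" for \<alpha> \<gamma>
    using that by (intro power_card_Int_symdiff) (auto simp: Bset_def finite_subset)
  have "(\<Sum>\<gamma>\<in>Pow {..<k}. z \<gamma> * (-1) ^ card (A \<inter> \<gamma>))
      = (\<Sum>\<gamma>\<in>Pow {..<k}. \<Sum>\<alpha>\<in>Bset k. c \<alpha> * (-1) ^ card (symdiff \<alpha> A \<inter> \<gamma>))"
    using c by (intro sum.cong refl) (simp add: sum_distrib_right mult.assoc char cong: sum.cong)
  also have "\<dots> = (\<Sum>\<alpha>\<in>Bset k. c \<alpha> * (\<Sum>\<gamma>\<in>Pow {..<k}. (-1) ^ card (symdiff \<alpha> A \<inter> \<gamma>)))"
    by (simp add: sum.swap[of _ "Pow {..<k}"] sum_distrib_left)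
  also have "\<dots> = 0"
  proof (intro sum.neutral ballI)
    fix \<alpha> assume "\<alpha> \<in> Bset k"
    then have \<alpha>: "\<alpha> \<subseteq> {..<k}" "card \<alpha> \<ge> 2" by (auto simp: Bset_def)
    have "symdiff \<alpha> A \<noteq> {}"
    proof
      assume "symdiff \<alpha> A = {}"
      then have "\<alpha> = A" by (auto simp: symdiff_def)
      then show False using \<alpha> A by simp
    qed
    moreover have "symdiff \<alpha> A \<subseteq> {..<k}" using \<alpha> A by (auto simp: symdiff_def)
    ultimately show "c \<alpha> * (\<Sum>\<gamma>\<in>Pow {..<k}. (-1::real) ^ card (symdiff \<alpha> A \<inter> \<gamma>)) = 0"
      by (simp add: sum_Pow_power_card_Int_eq_0)
  qed
  finally show ?thesis .
qed

lemma in_VB_sum_eq_0: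
  assumes "in_VB k z"
  shows "(\<Sum>\<gamma>\<in>Pow {..<k}. z \<gamma>) = 0"
  using in_VB_orthogonal_character[OF assms, of "{}"] by simp

lemma in_VB_orthogonal_sgn:
  assumes "in_VB k z" "i < k"
  shows "(\<Sum>\<gamma>\<in>Pow {..<k}. z \<gamma> * sgn_bool (i \<in> \<gamma>)) = 0"
  using in_VB_orthogonal_character[OF assms(1), of "{i}"] assms(2)
  by (simp add: sgn_bool_eq_power_card)

lemma SUB_component_sum_eq_0:
  assumes "y \<in> SUB k j" "l < j"
  shows "(\<Sum>\<gamma>\<in>Pow {..<k}. y l \<gamma>) = 0"
proof (cases "l < j - 1")
  case True
  then show ?thesis using assms(1) by (simp add: SUB_def in_Uk_def)
next
  case False
  then have "l = j - 1" using assms(2) by simp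
  then show ?thesis using assms(1) in_VB_sum_eq_0 by (simp add: SUB_def)
qed

section \<open>Horizontal norms, projection to the equators, and heights\<close>

definition hnorm :: "nat \<Rightarrow> (nat \<Rightarrow> nat \<Rightarrow> real) \<Rightarrow> nat \<Rightarrow> real" where
  "hnorm d x i = sqrt (\<Sum>t<d. (x i t)^2)"

definition hnorm_prod :: "nat \<Rightarrow> nat \<Rightarrow> (nat \<Rightarrow> nat \<Rightarrow> real) \<Rightarrow> real" where
  "hnorm_prod k d x = (\<Prod>i<k. hnorm d x i)"

definition equator_proj :: "nat \<Rightarrow> nat \<Rightarrow> (nat \<Rightarrow> nat \<Rightarrow> real) \<Rightarrow> (nat \<Rightarrow> nat \<Rightarrow> real)" where
  "equator_proj k d x = (\<lambda>i t. if i < k \<and> t < d then x i t / hnorm d x i else 0)"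

definition height_vec :: "nat \<Rightarrow> nat \<Rightarrow> (nat \<Rightarrow> nat \<Rightarrow> real) \<Rightarrow> nat set \<Rightarrow> real" where
  "height_vec k d x \<gamma> = (\<Sum>i<k. x i d * sgn_bool (i \<in> \<gamma>))"

lemma hnorm_sq: "(hnorm d x i)^2 = (\<Sum>t<d. (x i t)^2)"
  unfolding hnorm_def by (intro real_sqrt_pow2 sum_nonneg) simp

lemma hnorm_prod_neq_0_imp: "hnorm_prod k d x \<noteq> 0 \<Longrightarrow> i < k \<Longrightarrow> hnorm d x i \<noteq> 0"
  by (auto simp: hnorm_prod_def)

lemma Yspace_height_sq: "x \<in> Yspace d k \<Longrightarrow> i < k \<Longrightarrow> (x i d)^2 + (\<Sum>t<d. (x i t)^2) = 1"
  by (auto simp: Yspace_def sphere_pts_def lessThan_Suc_atMost[symmetric])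

lemma hnorm_prod_eq_1_if_heights_0:
  assumes "x \<in> Yspace d k" "\<forall>i<k. x i d = 0"
  shows "hnorm_prod k d x = 1"
  using Yspace_height_sq[OF assms(1)] assms(2) by (simp add: hnorm_prod_def hnorm_def)

lemma equator_proj_in_Yequator:
  assumes x: "x \<in> Yspace d k" and nz: "hnorm_prod k d x \<noteq> 0"
  shows "equator_proj k d x \<in> Yequator d k"
proof -
  have "equator_proj k d x i \<in> sphere_pts d" if i: "i < k" for i
  proof -
    have "(\<Sum>t\<le>d. (equator_proj k d x i t)^2) = (\<Sum>t<d. (x i t)^2) / (hnorm d x i)^2"
      using i by (simp add: lessThan_Suc_atMost[symmetric] equator_proj_def power_divide
          sum_divide_distrib)
    also have "\<dots> = 1"
      using hnorm_prod_neq_0_imp[OF nz i] hnorm_sq[of d x i] by (metis divide_self power_not_zero)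
    finally show ?thesis by (auto simp: sphere_pts_def equator_proj_def)
  qed
  then show ?thesis by (auto simp: Yequator_def Yspace_def equator_proj_def fun_eq_iff)
qed

lemma height_vec_sum_eq_0: "(\<Sum>\<gamma>\<in>Pow {..<k}. height_vec k d x \<gamma>) = 0"
proof -
  have "(\<Sum>\<gamma>\<in>Pow {..<k}. height_vec k d x \<gamma>)
      = (\<Sum>i<k. x i d * (\<Sum>\<gamma>\<in>Pow {..<k}. sgn_bool (i \<in> \<gamma>)))"
    unfolding height_vec_def by (simp add: sum.swap[of _ "Pow {..<k}"] sum_distrib_left)
  then show ?thesis by (simp add: sum_Pow_sgn_bool)
qed

lemma height_vec_sgn_sum:
  assumes "i0 < k"
  shows "(\<Sum>\<gamma>\<in>Pow {..<k}. height_vec k d x \<gamma> * sgn_bool (i0 \<in> \<gamma>)) = 2^k * x i0 d"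
proof -
  have "(\<Sum>\<gamma>\<in>Pow {..<k}. height_vec k d x \<gamma> * sgn_bool (i0 \<in> \<gamma>))
      = (\<Sum>i<k. x i d * (\<Sum>\<gamma>\<in>Pow {..<k}. sgn_bool (i \<in> \<gamma>) * sgn_bool (i0 \<in> \<gamma>)))"
    unfolding height_vec_def
    by (simp add: sum.swap[of _ "Pow {..<k}"] sum_distrib_left sum_distrib_right mult.assoc)
  also have "\<dots> = (\<Sum>i<k. x i d * (if i = i0 then 2^k else 0))"
    using assms by (intro sum.cong refl) (simp add: sum_Pow_sgn_bool_mult)
  also have "\<dots> = 2^k * x i0 d"
    using assms by (simp add: mult_ac if_distrib[of "\<lambda>v. x _ d * v"] sum.delta cong: if_cong)
  finally show ?thesis .
qed

lemma Wgroup_inv_bij: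
  assumes "(\<beta>, \<tau>) \<in> Wgroup k"
  shows "bij_betw (inv \<tau>) {..<k} {..<k}" and "\<And>i. i < k \<Longrightarrow> inv \<tau> i < k"
proof -
  have p: "inv \<tau> permutes {..<k}" using assms permutes_inv by (auto simp: Wgroup_def)
  show "bij_betw (inv \<tau>) {..<k} {..<k}" using permutes_imp_bij[OF p] .
  show "\<And>i. i < k \<Longrightarrow> inv \<tau> i < k" using permutes_in_image[OF p] by auto
qed

lemma hnorm_actY: "i < k \<Longrightarrow> hnorm d (actY k (\<beta>, \<tau>) x) i = hnorm d x (inv \<tau> i)"
  by (simp add: hnorm_def actY_def power_mult_distrib)

lemma hnorm_prod_actY:
  assumes g: "(\<beta>, \<tau>) \<in> Wgroup k"
  shows "hnorm_prod k d (actY k (\<beta>, \<tau>) x) = hnorm_prod k d x"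
proof -
  have "hnorm_prod k d (actY k (\<beta>, \<tau>) x) = (\<Prod>i<k. hnorm d x (inv \<tau> i))"
    unfolding hnorm_prod_def by (intro prod.cong) (auto simp: hnorm_actY)
  also have "\<dots> = hnorm_prod k d x"
    unfolding hnorm_prod_def using prod.reindex_bij_betw[OF Wgroup_inv_bij(1)[OF g]] by simp
  finally show ?thesis .
qed

lemma equator_proj_actY:
  assumes g: "(\<beta>, \<tau>) \<in> Wgroup k"
  shows "equator_proj k d (actY k (\<beta>, \<tau>) x) = actY k (\<beta>, \<tau>) (equator_proj k d x)"
proof (intro ext)
  fix i t
  show "equator_proj k d (actY k (\<beta>, \<tau>) x) i t = actY k (\<beta>, \<tau>) (equator_proj k d x) i t"
    using Wgroup_inv_bij(2)[OF g]
    by (cases "i < k") (simp_all add: equator_proj_def hnorm_actY, simp_all add: actY_def)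
qed

lemma height_vec_actY:
  assumes g: "(\<beta>, \<tau>) \<in> Wgroup k"
  shows "height_vec k d (actY k (\<beta>, \<tau>) x) \<gamma> = height_vec k d x (inv \<tau> ` symdiff \<beta> \<gamma>)"
proof -
  have inj: "inj (inv \<tau>)" using g permutes_inv[THEN permutes_inj] by (auto simp: Wgroup_def)
  have "height_vec k d x (inv \<tau> ` symdiff \<beta> \<gamma>)
      = (\<Sum>i<k. x (inv \<tau> i) d * sgn_bool (inv \<tau> i \<in> inv \<tau> ` symdiff \<beta> \<gamma>))"
    unfolding height_vec_def
    using sum.reindex_bij_betw[OF Wgroup_inv_bij(1)[OF g],
        of "\<lambda>i. x i d * sgn_bool (i \<in> inv \<tau> ` symdiff \<beta> \<gamma>)"]
    by simp
  also have "\<dots> = (\<Sum>i<k. x (inv \<tau> i) d * sgn_bool (i \<in> symdiff \<beta> \<gamma>))"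
    using inj by (simp add: inj_image_mem_iff)
  also have "\<dots> = height_vec k d (actY k (\<beta>, \<tau>) x) \<gamma>"
    unfolding height_vec_def actY_def by (intro sum.cong) (auto simp: sgn_bool_symdiff)
  finally show ?thesis by simp
qed

lemma continuous_on_coord: "continuous_on S (\<lambda>x::nat \<Rightarrow> nat \<Rightarrow> real. x i t)"
  by (intro continuous_on_product_then_coordinatewise[where f="\<lambda>x. x i"]
      continuous_on_product_then_coordinatewise[where f="\<lambda>x. x"] continuous_on_id)

lemma continuous_on_hnorm: "continuous_on S (\<lambda>x. hnorm d x i)"
  unfolding hnorm_def by (intro continuous_intros continuous_on_coord)

lemma continuous_on_hnorm_prod: "continuous_on S (hnorm_prod k d)"
  unfolding hnorm_prod_def by (intro continuous_intros continuous_on_hnorm)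

lemma continuous_on_height_vec: "continuous_on S (\<lambda>x. height_vec k d x \<gamma>)"
  unfolding height_vec_def by (intro continuous_intros continuous_on_coord)

lemma continuous_on_equator_proj:
  "continuous_on (S \<inter> {x. hnorm_prod k d x \<noteq> 0}) (equator_proj k d)"
proof (intro continuous_on_coordinatewise_then_product)
  fix i t
  show "continuous_on (S \<inter> {x. hnorm_prod k d x \<noteq> 0}) (\<lambda>x. equator_proj k d x i t)"
  proof (cases "i < k \<and> t < d")
    case True
    then show ?thesis unfolding equator_proj_def
      by (simp, intro continuous_intros continuous_on_coord continuous_on_hnorm)
        (auto dest: hnorm_prod_neq_0_imp)
  next
    case False
    then have "(\<lambda>x. equator_proj k d x i t) = (\<lambda>x. 0)" by (auto simp: equator_proj_def)
    then show ?thesis by (simp only: continuous_on_const)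
  qed
qed

section \<open>Extending an equivariant map from the equators\<close>

lemma continuous_on_mult_bounded_where_nonzero:
  fixes \<rho> H :: "'a::topological_space \<Rightarrow> real"
  assumes \<rho>: "continuous_on S \<rho>" and H: "continuous_on (S \<inter> {x. \<rho> x \<noteq> 0}) H"
    and bound: "\<And>x. x \<in> S \<Longrightarrow> \<rho> x \<noteq> 0 \<Longrightarrow> \<bar>H x\<bar> \<le> B"
  shows "continuous_on S (\<lambda>x. \<rho> x * H x)"
  unfolding continuous_on_def
proof
  fix x0 assume x0: "x0 \<in> S"
  show "((\<lambda>x. \<rho> x * H x) \<longlongrightarrow> \<rho> x0 * H x0) (at x0 within S)"
  proof (cases "\<rho> x0 = 0")
    case True
    have "((\<lambda>x. B * \<bar>\<rho> x\<bar>) \<longlongrightarrow> B * \<bar>0\<bar>) (at x0 within S)"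
      using \<rho> x0 True unfolding continuous_on_def by (intro tendsto_intros) force
    moreover have "norm (\<rho> x * H x) \<le> B * \<bar>\<rho> x\<bar>" if "x \<in> S" for x
      using bound[OF that] by (cases "\<rho> x = 0") (simp_all add: abs_mult mult.commute mult_right_mono)
    then have "eventually (\<lambda>x. norm (\<rho> x * H x) \<le> B * \<bar>\<rho> x\<bar>) (at x0 within S)"
      by (auto simp: eventually_at_filter)
    ultimately have "((\<lambda>x. \<rho> x * H x) \<longlongrightarrow> 0) (at x0 within S)"
      using Lim_null_comparison[of "\<lambda>x. \<rho> x * H x" "\<lambda>x. B * \<bar>\<rho> x\<bar>"] by simp
    then show ?thesis using True by simp
  next
    case False
    obtain A where A: "open A" "A \<inter> S = \<rho> -` (- {0}) \<inter> S"
      using \<rho> unfolding continuous_on_open_invariant by (meson open_Compl closed_singleton)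
    have "x0 \<in> A" using A x0 False by auto
    then have at_eq: "at x0 within S = at x0 within (S \<inter> {x. \<rho> x \<noteq> 0})"
      by (rule at_within_nhd[OF _ A(1)]) (use A in auto)
    have "continuous_on (S \<inter> {x. \<rho> x \<noteq> 0}) (\<lambda>x. \<rho> x * H x)"
      by (intro continuous_intros H continuous_on_subset[OF \<rho>]) auto
    then show ?thesis unfolding at_eq continuous_on_def using x0 False by auto
  qed
qed

definition extend_map ::
  "nat \<Rightarrow> nat \<Rightarrow> nat \<Rightarrow> ((nat \<Rightarrow> nat \<Rightarrow> real) \<Rightarrow> (nat \<Rightarrow> nat set \<Rightarrow> real))
     \<Rightarrow> (nat \<Rightarrow> nat \<Rightarrow> real) \<Rightarrow> (nat \<Rightarrow> nat set \<Rightarrow> real)" where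
  "extend_map k d j f x = (\<lambda>l \<gamma>. if l < j \<and> \<gamma> \<subseteq> {..<k}
      then hnorm_prod k d x * f (equator_proj k d x) l \<gamma>
        + (if l = j - 1 then height_vec k d x \<gamma> else 0)
      else 0)"

context
  fixes d k j :: nat and f :: "(nat \<Rightarrow> nat \<Rightarrow> real) \<Rightarrow> (nat \<Rightarrow> nat set \<Rightarrow> real)"
  assumes f: "equivariant_map k (Yequator d k) (SUB k j) f" and j: "j \<ge> 1"
begin

lemma f_equator_proj_in_SUB:
  "x \<in> Yspace d k \<Longrightarrow> hnorm_prod k d x \<noteq> 0 \<Longrightarrow> f (equator_proj k d x) \<in> SUB k j"
  using equator_proj_in_Yequator f unfolding equivariant_map_def by blast

lemma extend_map_in_Uk:
  assumes x: "x \<in> Yspace d k" and l: "l < j"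
  shows "in_Uk k (extend_map k d j f x l)"
proof -
  have "(\<Sum>\<gamma>\<in>Pow {..<k}. extend_map k d j f x l \<gamma>)
      = (\<Sum>\<gamma>\<in>Pow {..<k}. hnorm_prod k d x * f (equator_proj k d x) l \<gamma>
          + (if l = j - 1 then height_vec k d x \<gamma> else 0))"
    using l by (intro sum.cong refl) (simp add: extend_map_def)
  also have "\<dots> = hnorm_prod k d x * (\<Sum>\<gamma>\<in>Pow {..<k}. f (equator_proj k d x) l \<gamma>)"
    by (cases "l = j - 1") (simp_all add: sum.distrib sum_distrib_left height_vec_sum_eq_0)
  also have "\<dots> = 0"
    using SUB_component_sum_eq_0[OF f_equator_proj_in_SUB[OF x] l]
    by (cases "hnorm_prod k d x = 0") simp_all
  finally show ?thesis by (simp add: in_Uk_def extend_map_def)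
qed

lemma extend_map_last_sgn_sum:
  assumes x: "x \<in> Yspace d k" and i0: "i0 < k"
  shows "(\<Sum>\<gamma>\<in>Pow {..<k}. extend_map k d j f x (j - 1) \<gamma> * sgn_bool (i0 \<in> \<gamma>)) = 2^k * x i0 d"
proof -
  let ?\<rho> = "hnorm_prod k d x" and ?h = "f (equator_proj k d x) (j - 1)"
  have "(\<Sum>\<gamma>\<in>Pow {..<k}. extend_map k d j f x (j - 1) \<gamma> * sgn_bool (i0 \<in> \<gamma>))
      = (\<Sum>\<gamma>\<in>Pow {..<k}. ?\<rho> * (?h \<gamma> * sgn_bool (i0 \<in> \<gamma>))
          + height_vec k d x \<gamma> * sgn_bool (i0 \<in> \<gamma>))"
    using j by (intro sum.cong refl) (simp add: extend_map_def algebra_simps)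
  also have "\<dots> = ?\<rho> * (\<Sum>\<gamma>\<in>Pow {..<k}. ?h \<gamma> * sgn_bool (i0 \<in> \<gamma>)) + 2^k * x i0 d"
    by (simp add: sum.distrib sum_distrib_left height_vec_sgn_sum[OF i0])
  also have "?\<rho> * (\<Sum>\<gamma>\<in>Pow {..<k}. ?h \<gamma> * sgn_bool (i0 \<in> \<gamma>)) = 0"
  proof (cases "?\<rho> = 0")
    case False
    then have "in_VB k ?h" using f_equator_proj_in_SUB[OF x] by (simp add: SUB_def)
    then show ?thesis using in_VB_orthogonal_sgn[OF _ i0] by simp
  qed simp
  finally show ?thesis by simp
qed

lemma extend_map_sqnorm_pos:
  assumes x: "x \<in> Yspace d k"
  shows "sqnorm k j (extend_map k d j f x) > 0"
proof (rule ccontr)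
  assume "\<not> ?thesis"
  then have zero: "sqnorm k j (extend_map k d j f x) = 0" using sqnorm_nonneg[of k j "extend_map k d j f x"] by linarith
  show False
  proof (cases "\<forall>i<k. x i d = 0")
    case True
    then have \<rho>: "hnorm_prod k d x = 1" using hnorm_prod_eq_1_if_heights_0[OF x] by blast
    have "height_vec k d x \<gamma> = 0" for \<gamma> using True by (simp add: height_vec_def)
    then have "sqnorm k j (extend_map k d j f x) = sqnorm k j (f (equator_proj k d x))"
      unfolding sqnorm_def by (intro sum.cong refl) (simp add: extend_map_def \<rho>)
    then show False using zero f_equator_proj_in_SUB[OF x] \<rho> by (simp add: SUB_def)
  next
    case False
    then obtain i0 where i0: "i0 < k" "x i0 d \<noteq> 0" by auto
    have "(\<Sum>\<gamma>\<in>Pow {..<k}. extend_map k d j f x (j - 1) \<gamma> * sgn_bool (i0 \<in> \<gamma>)) = 0"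
      using sqnorm_eq_0_imp_coord_eq_0[OF zero] j by simp
    then show False using extend_map_last_sgn_sum[OF x i0(1)] i0(2) by simp
  qed
qed

lemma continuous_on_extend_map_coord:
  "continuous_on (Yspace d k) (\<lambda>x. extend_map k d j f x l \<gamma>)"
proof (cases "l < j \<and> \<gamma> \<subseteq> {..<k}")
  case True
  let ?S = "Yspace d k"
  have "continuous_on (?S \<inter> {x. hnorm_prod k d x \<noteq> 0}) (f \<circ> equator_proj k d)"
    using f unfolding equivariant_map_def
    by (intro continuous_on_compose continuous_on_equator_proj)
      (auto intro: continuous_on_subset equator_proj_in_Yequator)
  then have "continuous_on (?S \<inter> {x. hnorm_prod k d x \<noteq> 0}) (\<lambda>x. f (equator_proj k d x) l \<gamma>)"
    unfolding comp_def
    by (intro continuous_on_product_then_coordinatewise[where f="\<lambda>x. f (equator_proj k d x) l"]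
        continuous_on_product_then_coordinatewise[where f="\<lambda>x. f (equator_proj k d x)"])
  \<comment> \<open>the factor f(equator_proj x) is only controlled where hnorm_prod x \<noteq> 0, but is bounded by 1 there\<close>
  then have "continuous_on ?S (\<lambda>x. hnorm_prod k d x * f (equator_proj k d x) l \<gamma>)"
    by (rule continuous_on_mult_bounded_where_nonzero[OF continuous_on_hnorm_prod _, where B=1])
      (use True in \<open>auto intro: abs_coord_SUB_le_1 f_equator_proj_in_SUB\<close>)
  moreover have "continuous_on ?S (\<lambda>x. if l = j - 1 then height_vec k d x \<gamma> else 0)"
    by (cases "l = j - 1") (simp_all add: continuous_on_height_vec)
  ultimately show ?thesis
    using True by (simp add: extend_map_def continuous_on_add)
next
  case False
  then have "(\<lambda>x. extend_map k d j f x l \<gamma>) = (\<lambda>x. 0)"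
    unfolding extend_map_def by (simp only: if_False)
  then show ?thesis by (simp only: continuous_on_const)
qed

lemma extend_map_actY:
  assumes g: "(\<beta>, \<tau>) \<in> Wgroup k" and x: "x \<in> Yspace d k"
  shows "extend_map k d j f (actY k (\<beta>, \<tau>) x) = actU k (\<beta>, \<tau>) (extend_map k d j f x)"
proof (intro ext)
  fix l \<gamma>
  show "extend_map k d j f (actY k (\<beta>, \<tau>) x) l \<gamma> = actU k (\<beta>, \<tau>) (extend_map k d j f x) l \<gamma>"
  proof (cases "\<gamma> \<subseteq> {..<k}")
    case True
    define \<delta> where "\<delta> = inv \<tau> ` symdiff \<beta> \<gamma>"
    have \<delta>: "\<delta> \<subseteq> {..<k}" using bij_betwE[OF bij_betw_act_idx_inv[OF g]] True by (auto simp: \<delta>_def)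
    have f_part: "hnorm_prod k d x * f (equator_proj k d (actY k (\<beta>, \<tau>) x)) l' \<gamma>
        = hnorm_prod k d x * f (equator_proj k d x) l' \<delta>" for l'
    proof (cases "hnorm_prod k d x = 0")
      case False
      have "f (equator_proj k d (actY k (\<beta>, \<tau>) x)) = actU k (\<beta>, \<tau>) (f (equator_proj k d x))"
        using f g equator_proj_in_Yequator[OF x False]
        by (simp add: equator_proj_actY equivariant_map_def)
      then show ?thesis using True g by (simp add: actU_apply \<delta>_def)
    qed simp
    show ?thesis using True \<delta> g f_part
      by (simp add: extend_map_def actU_apply hnorm_prod_actY height_vec_actY \<delta>_def)
  next
    case False
    then show ?thesis using g by (simp add: extend_map_def actU_apply)
  qed
qed

lemma normalized_extend_map_equivariant:
  "equivariant_map k (Yspace d k) (SU k j) (\<lambda>x. normalize k j (extend_map k d j f x))"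
  unfolding equivariant_map_def
proof (intro conjI ballI subsetI)
  show "continuous_on (Yspace d k) (\<lambda>x. normalize k j (extend_map k d j f x))"
    by (intro continuous_on_normalize continuous_on_extend_map_coord extend_map_sqnorm_pos)
next
  fix y assume "y \<in> (\<lambda>x. normalize k j (extend_map k d j f x)) ` Yspace d k"
  then obtain x where x: "x \<in> Yspace d k" and y: "y = normalize k j (extend_map k d j f x)" by blast
  show "y \<in> SU k j" unfolding y
    by (intro normalize_in_SU allI impI extend_map_in_Uk[OF x] extend_map_sqnorm_pos[OF x])
      (auto simp: extend_map_def)
next
  fix g x assume g: "g \<in> Wgroup k" and x: "x \<in> Yspace d k"
  obtain \<beta> \<tau> where "g = (\<beta>, \<tau>)" by fastforce
  then show "normalize k j (extend_map k d j f (actY k g x)) = actU k g (normalize k j (extend_map k d j f x))"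
    using g x by (simp add: extend_map_actY normalize_actU)
qed

end

theorem proposition3p3:
  fixes d k j :: nat
  assumes "d \<ge> 1" and "k \<ge> 1" and "j \<ge> 1"
    and "\<not> (\<exists>f. equivariant_map k (Yspace d k) (SU k j) f)"
  shows "\<not> (\<exists>f. equivariant_map k (Yequator d k) (SUB k j) f)"
  using normalized_extend_map_equivariant[OF _ \<open>j \<ge> 1\<close>] assms(4) by blast

end
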